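(* For every integer $l\ge 3$ there is no Neumaier graph with parameters $(6l+3,\,4l+2,\,3l;\,l+1,\,2l+1)$.
   Context: All graphs are finite, simple, undirected. A regular graph is $\lambda$-edge-regular if it has at least one edge and any two adjacent vertices have exactly $\lambda$ common neighbours. An edge-regular graph with parameters $(v,k,\lambda)$ has $v$ vertices, is $k$-regular and $\lambda$-edge-regular. For a regular graph, a clique $S$ is $e$-regular ($e>0$) if every vertex outside $S$ has exactly $e$ neighbours in $S$. A Neumaier graph with parameters $(v,k,\lambda;e,s)$ is a non-complete edge-regular graph with parameters $(v,k,\lambda)$ containing an $e$-regular clique of size $s$. *)

theory Defs
  imports Main
begin

definition simple_graph :: "'a set \<Rightarrow> ('a \<Rightarrow> 'a \<Rightarrow> bool) \<Rightarrow> bool" where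
  "simple_graph V E \<longleftrightarrow> finite V \<and> (\<forall>x y. E x y \<longrightarrow> x \<in> V \<and> y \<in> V)
     \<and> (\<forall>x y. E x y \<longrightarrow> E y x) \<and> (\<forall>x. \<not> E x x)"

definition nbhd :: "'a set \<Rightarrow> ('a \<Rightarrow> 'a \<Rightarrow> bool) \<Rightarrow> 'a \<Rightarrow> 'a set" where
  "nbhd V E x = {y \<in> V. E x y}"

definition regular :: "'a set \<Rightarrow> ('a \<Rightarrow> 'a \<Rightarrow> bool) \<Rightarrow> nat \<Rightarrow> bool" where
  "regular V E k \<longleftrightarrow> (\<forall>x\<in>V. card (nbhd V E x) = k)"

definition edge_regular :: "'a set \<Rightarrow> ('a \<Rightarrow> 'a \<Rightarrow> bool) \<Rightarrow> nat \<Rightarrow> nat \<Rightarrow> nat \<Rightarrow> bool" where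
  "edge_regular V E v k lam \<longleftrightarrow> simple_graph V E \<and> card V = v \<and> regular V E k
     \<and> (\<exists>x y. E x y)
     \<and> (\<forall>x y. E x y \<longrightarrow> card (nbhd V E x \<inter> nbhd V E y) = lam)"

definition is_clique :: "'a set \<Rightarrow> ('a \<Rightarrow> 'a \<Rightarrow> bool) \<Rightarrow> 'a set \<Rightarrow> bool" where
  "is_clique V E S \<longleftrightarrow> S \<subseteq> V \<and> (\<forall>x\<in>S. \<forall>y\<in>S. x \<noteq> y \<longrightarrow> E x y)"

definition regular_clique :: "'a set \<Rightarrow> ('a \<Rightarrow> 'a \<Rightarrow> bool) \<Rightarrow> nat \<Rightarrow> 'a set \<Rightarrow> bool" where
  "regular_clique V E e S \<longleftrightarrow> e > 0 \<and> is_clique V E S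
     \<and> (\<forall>x\<in>V - S. card (nbhd V E x \<inter> S) = e)"

definition complete_graph :: "'a set \<Rightarrow> ('a \<Rightarrow> 'a \<Rightarrow> bool) \<Rightarrow> bool" where
  "complete_graph V E \<longleftrightarrow> (\<forall>x\<in>V. \<forall>y\<in>V. x \<noteq> y \<longrightarrow> E x y)"

definition neumaier :: "'a set \<Rightarrow> ('a \<Rightarrow> 'a \<Rightarrow> bool) \<Rightarrow> nat \<Rightarrow> nat \<Rightarrow> nat \<Rightarrow> nat \<Rightarrow> nat \<Rightarrow> bool" where
  "neumaier V E v k lam e s \<longleftrightarrow> edge_regular V E v k lam \<and> \<not> complete_graph V E
     \<and> (\<exists>S. regular_clique V E e S \<and> card S = s)"

end

theory Submission
  imports Defs
begin

(* Let S be the clique and T = V - S. Counting degrees, every y in T has exactly l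
   non-neighbours in T, and each of the l + 1 clique neighbours of y is adjacent to exactly
   one of them. The clique neighbourhoods of outside vertices have l + 1 points in a set of
   2l + 1, so any two of them meet; double counting shows that the l non-neighbours q of y
   meet the clique neighbourhood of y in l + 1 points altogether. Hence two of them, q1 and
   q2, meet it in a single point, and so both contain the remaining l points of S. If q1 and
   q2 are adjacent, their neighbourhoods in T - {y} force more than 3l common neighbours;
   otherwise y and q2 are among the l non-neighbours of q1, and the same double count for
   q1 is exceeded. *)

lemma two_terms_plus_card_le_sum:
  fixes f :: "'a \<Rightarrow> nat"
  assumes "finite A" "a \<in> A" "b \<in> A" "a \<noteq> b" and pos: "\<And>x. x \<in> A \<Longrightarrow> 1 \<le> f x"
  shows "f a + f b + (card A - 2) \<le> sum f A"
proof -
  have "sum f A = f a + sum f (A - {a})"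
    using assms(1,2) by (rule sum.remove)
  also have "sum f (A - {a}) = f b + sum f (A - {a} - {b})"
    using assms(1,3,4) by (intro sum.remove) auto
  finally have split: "sum f A = f a + f b + sum f (A - {a, b})"
    by (simp add: Diff_insert2[symmetric])
  have "card (A - {a, b}) = card A - 2"
    using assms(1-4) by (simp add: card_Diff_subset)
  moreover have "card (A - {a, b}) \<le> sum f (A - {a, b})"
    using sum_mono[of "A - {a, b}" "\<lambda>_. 1" f] pos by simp
  ultimately show ?thesis using split by simp
qed

lemma two_ones_if_sum_eq_card_plus_one:
  fixes f :: "'a \<Rightarrow> nat"
  assumes "finite A" "3 \<le> card A" and pos: "\<And>x. x \<in> A \<Longrightarrow> 1 \<le> f x"
    and sum: "sum f A = card A + 1"
  obtains a b where "a \<in> A" "b \<in> A" "a \<noteq> b" "f a = 1" "f b = 1"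
proof -
  define F where "F = {x \<in> A. f x = 1}"
  have "card (A - F) \<le> Suc 0"
  proof (subst card_le_Suc0_iff_eq)
    show "\<forall>x\<in>A - F. \<forall>y\<in>A - F. x = y"
    proof (intro ballI, rule ccontr)
      fix x y assume "x \<in> A - F" "y \<in> A - F" "x \<noteq> y"
      then have "1 \<le> f x" "1 \<le> f y" "f x \<noteq> 1" "f y \<noteq> 1"
        using pos by (simp_all add: F_def)
      then have "2 \<le> f x" "2 \<le> f y" by simp_all
      then show False
        using two_terms_plus_card_le_sum[of A x y f] \<open>x \<in> A - F\<close> \<open>y \<in> A - F\<close>
          \<open>x \<noteq> y\<close> assms by auto
    qed
  qed (use assms(1) in simp)
  moreover have "card A = card F + card (A - F)"
    using card_Int_Diff[OF assms(1), of F] by (simp add: F_def Int_absorb1)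
  ultimately have "2 \<le> card F" using assms(2) by linarith
  moreover have "finite F" using assms(1) by (simp add: F_def)
  ultimately obtain a b where "a \<in> F" "b \<in> F" "a \<noteq> b"
    using card_le_Suc0_iff_eq[of F] by (metis not_less_eq_eq numeral_2_eq_2)
  then show ?thesis
    using that[of a b] by (simp add: F_def)
qed

locale edge_regular_graph_with_regular_clique =
  fixes V :: "'a set" and E :: "'a \<Rightarrow> 'a \<Rightarrow> bool" and k lam e :: nat and S :: "'a set"
  assumes simple: "simple_graph V E"
    and regular: "regular V E k"
    and common_nbhd: "\<And>x y. E x y \<Longrightarrow> card (nbhd V E x \<inter> nbhd V E y) = lam"
    and regular_clique: "regular_clique V E e S"
begin

lemma finite_V: "finite V"
  and adj_in_V: "E x y \<Longrightarrow> x \<in> V \<and> y \<in> V"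
  and adj_sym: "E x y \<Longrightarrow> E y x"
  and adj_irrefl: "\<not> E x x"
  using simple by (auto simp: simple_graph_def)

lemma S_subset_V: "S \<subseteq> V"
  and clique_adj: "x \<in> S \<Longrightarrow> y \<in> S \<Longrightarrow> x \<noteq> y \<Longrightarrow> E x y"
  and card_nbhd_Int_clique: "x \<in> V - S \<Longrightarrow> card (nbhd V E x \<inter> S) = e"
  using regular_clique by (auto simp: regular_clique_def is_clique_def)

lemma finite_S: "finite S"
  using S_subset_V finite_V by (rule finite_subset)

lemma finite_nbhd: "finite (nbhd V E x)"
  using finite_V by (simp add: nbhd_def)

lemma card_outside_clique: "card (V - S) + card S = card V"
  using card_Diff_subset[OF finite_S S_subset_V] card_mono[OF finite_V S_subset_V] by simp

lemma card_nbhd: "x \<in> V \<Longrightarrow> card (nbhd V E x) = k"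
  using regular by (simp add: regular_def)

lemma not_in_nbhd_self: "x \<notin> nbhd V E x"
  by (simp add: nbhd_def adj_irrefl)

definition clique_nbhd :: "'a \<Rightarrow> 'a set" where
  "clique_nbhd q = nbhd V E q \<inter> S"

definition outer_non_nbhd :: "'a \<Rightarrow> 'a set" where
  "outer_non_nbhd y = {q \<in> V - S. q \<noteq> y \<and> \<not> E y q}"

lemma finite_clique_nbhd: "finite (clique_nbhd q)"
  using finite_S by (simp add: clique_nbhd_def)

lemma card_clique_nbhd: "q \<in> V - S \<Longrightarrow> card (clique_nbhd q) = e"
  by (simp add: clique_nbhd_def card_nbhd_Int_clique)

lemma finite_outer_non_nbhd: "finite (outer_non_nbhd y)"
  using finite_V by (simp add: outer_non_nbhd_def)

lemma card_nbhd_Diff_clique: "y \<in> V - S \<Longrightarrow> card (nbhd V E y - S) + e = k"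
  using card_Int_Diff[OF finite_nbhd, of y S] card_nbhd card_nbhd_Int_clique by simp

lemma card_nbhd_Diff_clique_of_clique_vertex:
  assumes "x \<in> S"
  shows "card (nbhd V E x - S) + card S = k + 1"
proof -
  have "nbhd V E x \<inter> S = S - {x}"
    using assms S_subset_V clique_adj adj_irrefl by (auto simp: nbhd_def)
  then have "k = card (S - {x}) + card (nbhd V E x - S)"
    using card_Int_Diff[OF finite_nbhd, of x S] card_nbhd[of x] assms S_subset_V by auto
  then show ?thesis
    using card.remove[OF finite_S assms] by simp
qed

lemma card_outer_non_nbhd:
  assumes "y \<in> V - S"
  shows "card (outer_non_nbhd y) + k + card S + 1 = card V + e"
proof -
  have sub: "insert y (nbhd V E y - S) \<subseteq> V - S"
    using assms by (auto simp: nbhd_def)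
  have "outer_non_nbhd y = (V - S) - insert y (nbhd V E y - S)"
    by (auto simp: outer_non_nbhd_def nbhd_def)
  moreover have "finite (insert y (nbhd V E y - S))"
    using finite_nbhd by simp
  ultimately have "card (outer_non_nbhd y) + card (insert y (nbhd V E y - S)) = card (V - S)"
    using card_Diff_subset[OF _ sub] card_mono[OF _ sub] finite_V by simp
  moreover have "card (insert y (nbhd V E y - S)) = card (nbhd V E y - S) + 1"
    using finite_nbhd not_in_nbhd_self by simp
  ultimately show ?thesis
    using card_nbhd_Diff_clique[OF assms] card_outside_clique by linarith
qed

lemma card_common_nbhd_Diff_clique:
  assumes "y \<in> V - S" "x \<in> clique_nbhd y"
  shows "card (nbhd V E x \<inter> nbhd V E y - S) + e = lam + 1"
proof -
  have "x \<in> S" "E y x"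
    using assms(2) by (auto simp: clique_nbhd_def nbhd_def)
  have "nbhd V E x \<inter> nbhd V E y \<inter> S = clique_nbhd y - {x}"
    using \<open>x \<in> S\<close> S_subset_V clique_adj adj_irrefl
    by (auto simp: clique_nbhd_def nbhd_def)
  then have "lam = card (clique_nbhd y - {x}) + card (nbhd V E x \<inter> nbhd V E y - S)"
    using card_Int_Diff[of "nbhd V E x \<inter> nbhd V E y" S] finite_nbhd
      common_nbhd[OF adj_sym[OF \<open>E y x\<close>]] by simp
  then show ?thesis
    using card.remove[OF finite_clique_nbhd assms(2)] card_clique_nbhd[OF assms(1)] by simp
qed

lemma card_clique_neighbours_in_outer_non_nbhd:
  assumes "y \<in> V - S" "x \<in> clique_nbhd y"
  shows "card {q \<in> outer_non_nbhd y. E x q} + lam + card S + 1 = k + e"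
proof -
  have "x \<in> S" "E x y"
    using assms(2) adj_sym by (auto simp: clique_nbhd_def nbhd_def)
  have "nbhd V E x - S
      = insert y (nbhd V E x \<inter> nbhd V E y - S) \<union> {q \<in> outer_non_nbhd y. E x q}"
    using assms(1) \<open>E x y\<close> adj_in_V by (auto simp: nbhd_def outer_non_nbhd_def)
  moreover have "y \<notin> nbhd V E x \<inter> nbhd V E y - S"
    using not_in_nbhd_self by simp
  moreover have "(nbhd V E x \<inter> nbhd V E y - S) \<inter> {q \<in> outer_non_nbhd y. E x q} = {}"
    by (auto simp: nbhd_def outer_non_nbhd_def)
  moreover have "y \<notin> outer_non_nbhd y"
    by (simp add: outer_non_nbhd_def)
  ultimately have "card (nbhd V E x - S)
      = 1 + card (nbhd V E x \<inter> nbhd V E y - S) + card {q \<in> outer_non_nbhd y. E x q}"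
    using finite_nbhd finite_outer_non_nbhd by (simp add: card_Un_disjoint)
  then show ?thesis
    using card_nbhd_Diff_clique_of_clique_vertex[OF \<open>x \<in> S\<close>]
      card_common_nbhd_Diff_clique[OF assms] by linarith
qed

lemma sum_card_clique_nbhd_Int:
  assumes "y \<in> V - S"
  shows "(\<Sum>q\<in>outer_non_nbhd y. card (clique_nbhd q \<inter> clique_nbhd y))
    = e * (k + e - (lam + card S + 1))"
proof -
  have "clique_nbhd q \<inter> clique_nbhd y = {x \<in> clique_nbhd y. E q x}" for q
    by (auto simp: clique_nbhd_def nbhd_def)
  then have "(\<Sum>q\<in>outer_non_nbhd y. card (clique_nbhd q \<inter> clique_nbhd y))
      = (\<Sum>q\<in>outer_non_nbhd y. card {x \<in> clique_nbhd y. E q x})"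
    by simp
  also have "\<dots> = (k + e - (lam + card S + 1)) * card (clique_nbhd y)"
  proof (rule sum_multicount[OF finite_outer_non_nbhd finite_clique_nbhd], rule ballI)
    fix x assume "x \<in> clique_nbhd y"
    have "{q \<in> outer_non_nbhd y. E q x} = {q \<in> outer_non_nbhd y. E x q}"
      using adj_sym by blast
    then show "card {q \<in> outer_non_nbhd y. E q x} = k + e - (lam + card S + 1)"
      using card_clique_neighbours_in_outer_non_nbhd[OF assms \<open>x \<in> clique_nbhd y\<close>] by simp
  qed
  finally show ?thesis
    using card_clique_nbhd[OF assms] by simp
qed

lemma card_clique_nbhd_Int_lower:
  assumes "q \<in> V - S" "y \<in> V - S"
  shows "2 * e \<le> card (clique_nbhd q \<inter> clique_nbhd y) + card S"
proof -
  have "card (clique_nbhd q \<union> clique_nbhd y) \<le> card S"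
    using finite_S by (rule card_mono) (auto simp: clique_nbhd_def)
  then show ?thesis
    using card_Un_Int[OF finite_clique_nbhd finite_clique_nbhd, of q y]
      card_clique_nbhd[OF assms(1)] card_clique_nbhd[OF assms(2)] by simp
qed

lemma clique_Diff_subset_clique_nbhd_if_least_meet:
  assumes "q \<in> V - S" "y \<in> V - S"
    and "card (clique_nbhd q \<inter> clique_nbhd y) + card S = 2 * e"
  shows "S - clique_nbhd y \<subseteq> clique_nbhd q"
proof -
  have sub: "clique_nbhd q \<union> clique_nbhd y \<subseteq> S"
    by (auto simp: clique_nbhd_def)
  have "card (clique_nbhd q \<union> clique_nbhd y) = card S"
    using card_Un_Int[OF finite_clique_nbhd finite_clique_nbhd, of q y] assms
      card_clique_nbhd[OF assms(1)] card_clique_nbhd[OF assms(2)] by simp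
  then have "clique_nbhd q \<union> clique_nbhd y = S"
    using card_subset_eq[OF finite_S sub] by simp
  then show ?thesis by blast
qed

lemma card_clique_nbhd_Int_if_least_meets:
  assumes "q1 \<in> V - S" "q2 \<in> V - S" "y \<in> V - S"
    and "card (clique_nbhd q1 \<inter> clique_nbhd y) + card S = 2 * e"
    and "card (clique_nbhd q2 \<inter> clique_nbhd y) + card S = 2 * e"
  shows "card S \<le> card (clique_nbhd q1 \<inter> clique_nbhd q2) + e"
proof -
  have "S - clique_nbhd y \<subseteq> clique_nbhd q1 \<inter> clique_nbhd q2"
    using clique_Diff_subset_clique_nbhd_if_least_meet assms by blast
  then have "card (S - clique_nbhd y) \<le> card (clique_nbhd q1 \<inter> clique_nbhd q2)"
    by (simp add: card_mono finite_clique_nbhd)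
  moreover have "card S = card (clique_nbhd y) + card (S - clique_nbhd y)"
    using card_Int_Diff[OF finite_S, of "clique_nbhd y"] by (auto simp: clique_nbhd_def Int_absorb1)
  ultimately show ?thesis
    using card_clique_nbhd[OF assms(3)] by simp
qed

lemma outer_non_nbhd_sym:
  "y \<in> V - S \<Longrightarrow> q \<in> outer_non_nbhd y \<Longrightarrow> y \<in> outer_non_nbhd q"
  by (auto simp: outer_non_nbhd_def dest: adj_sym)

lemma card_clique_nbhd_Int_if_adjacent:
  assumes "y \<in> V - S" "q1 \<in> outer_non_nbhd y" "q2 \<in> outer_non_nbhd y" "E q1 q2"
  shows "card (clique_nbhd q1 \<inter> clique_nbhd q2) + 2 * k + card S + 1 \<le> lam + card V + 2 * e"
proof -
  let ?N1 = "nbhd V E q1 - S" and ?N2 = "nbhd V E q2 - S"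
  have q: "q1 \<in> V - S" "q2 \<in> V - S"
    using assms(2,3) by (auto simp: outer_non_nbhd_def)
  have "?N1 \<union> ?N2 \<subseteq> (V - S) - {y}"
    using assms(2,3) adj_sym by (auto simp: nbhd_def outer_non_nbhd_def)
  then have "card (?N1 \<union> ?N2) \<le> card ((V - S) - {y})"
    using finite_V by (intro card_mono) auto
  also have "Suc (card ((V - S) - {y})) = card (V - S)"
    using finite_V assms(1) by (intro card.remove[symmetric]) auto
  finally have union: "card (?N1 \<union> ?N2) + card S + 1 \<le> card V"
    using card_outside_clique by simp
  have inter: "card ?N1 + card ?N2 = card (?N1 \<union> ?N2) + card (?N1 \<inter> ?N2)"
    by (rule card_Un_Int) (use finite_nbhd in auto)
  have "nbhd V E q1 \<inter> nbhd V E q2 \<inter> S = clique_nbhd q1 \<inter> clique_nbhd q2"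
    "nbhd V E q1 \<inter> nbhd V E q2 - S = ?N1 \<inter> ?N2"
    by (auto simp: clique_nbhd_def)
  then have lam: "lam = card (clique_nbhd q1 \<inter> clique_nbhd q2) + card (?N1 \<inter> ?N2)"
    using card_Int_Diff[of "nbhd V E q1 \<inter> nbhd V E q2" S] finite_nbhd common_nbhd[OF assms(4)]
    by simp
  show ?thesis
    using union inter lam card_nbhd_Diff_clique[OF q(1)] card_nbhd_Diff_clique[OF q(2)]
    by linarith
qed

lemma obtain_two_least_meets_in_outer_non_nbhd:
  assumes y: "y \<in> V - S" and "3 \<le> card (outer_non_nbhd y)"
    and "card S + 1 = 2 * e" and "k + e = lam + card S + 2" and "e = card (outer_non_nbhd y) + 1"
  obtains q1 q2 where "q1 \<in> outer_non_nbhd y" "q2 \<in> outer_non_nbhd y" "q1 \<noteq> q2"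
    "card (clique_nbhd q1 \<inter> clique_nbhd y) + card S = 2 * e"
    "card (clique_nbhd q2 \<inter> clique_nbhd y) + card S = 2 * e"
proof -
  have pos: "1 \<le> card (clique_nbhd q \<inter> clique_nbhd y)" if "q \<in> outer_non_nbhd y" for q
    using card_clique_nbhd_Int_lower[OF _ y, of q] that assms(3)
    by (simp add: outer_non_nbhd_def)
  have "(\<Sum>q\<in>outer_non_nbhd y. card (clique_nbhd q \<inter> clique_nbhd y)) = card (outer_non_nbhd y) + 1"
    using sum_card_clique_nbhd_Int[OF y] assms(4,5) by simp
  then obtain q1 q2 where "q1 \<in> outer_non_nbhd y" "q2 \<in> outer_non_nbhd y" "q1 \<noteq> q2"
    "card (clique_nbhd q1 \<inter> clique_nbhd y) = 1" "card (clique_nbhd q2 \<inter> clique_nbhd y) = 1"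
    using two_ones_if_sum_eq_card_plus_one[where f = "\<lambda>q. card (clique_nbhd q \<inter> clique_nbhd y)",
        OF finite_outer_non_nbhd assms(2) pos]
    by blast
  then show ?thesis
    using that assms(3) by simp
qed

lemma card_clique_nbhd_Int_if_non_adjacent:
  assumes y: "y \<in> V - S" and q: "q1 \<in> outer_non_nbhd y" "q2 \<in> outer_non_nbhd y" "q1 \<noteq> q2"
    and "\<not> E q1 q2" and "card S + 1 = 2 * e"
  shows "card (clique_nbhd q1 \<inter> clique_nbhd q2) + card (outer_non_nbhd q1)
    \<le> e * (k + e - (lam + card S + 1)) + 1"
proof -
  have q1: "q1 \<in> V - S"
    using q(1) by (simp add: outer_non_nbhd_def)
  have pos: "1 \<le> card (clique_nbhd q \<inter> clique_nbhd q1)" if "q \<in> outer_non_nbhd q1" for q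
    using card_clique_nbhd_Int_lower[OF _ q1, of q] that assms(6)
    by (simp add: outer_non_nbhd_def)
  have y_q2: "y \<in> outer_non_nbhd q1" "q2 \<in> outer_non_nbhd q1" "y \<noteq> q2"
    using outer_non_nbhd_sym[OF y q(1)] q assms(5) by (auto simp: outer_non_nbhd_def)
  have "card (clique_nbhd y \<inter> clique_nbhd q1) + card (clique_nbhd q2 \<inter> clique_nbhd q1)
      + (card (outer_non_nbhd q1) - 2)
      \<le> (\<Sum>q\<in>outer_non_nbhd q1. card (clique_nbhd q \<inter> clique_nbhd q1))"
    using two_terms_plus_card_le_sum[OF finite_outer_non_nbhd y_q2 pos] .
  moreover have "2 \<le> card (outer_non_nbhd q1)"
    using y_q2 finite_outer_non_nbhd card_le_Suc0_iff_eq[of "outer_non_nbhd q1"] by fastforce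
  ultimately show ?thesis
    using sum_card_clique_nbhd_Int[OF q1] pos[OF y_q2(1)] by (simp add: Int_commute)
qed

end

theorem mainTheorem3:
  fixes l :: nat and V :: "'a set" and E :: "'a \<Rightarrow> 'a \<Rightarrow> bool"
  assumes "l \<ge> 3"
  shows "\<not> neumaier V E (6*l+3) (4*l+2) (3*l) (l+1) (2*l+1)"
proof
  assume "neumaier V E (6*l+3) (4*l+2) (3*l) (l+1) (2*l+1)"
  then obtain S where G: "edge_regular_graph_with_regular_clique V E (4*l+2) (3*l) (l+1) S"
    and card_V: "card V = 6*l+3" and card_S: "card S = 2*l+1"
    by (auto simp: neumaier_def edge_regular_def edge_regular_graph_with_regular_clique_def)
  interpret G: edge_regular_graph_with_regular_clique V E "4*l+2" "3*l" "l+1" S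
    by (fact G)
  let ?B = G.clique_nbhd and ?Q = G.outer_non_nbhd
  have card_Q: "card (?Q y) = l" if "y \<in> V - S" for y
    using G.card_outer_non_nbhd[OF that] card_V card_S by simp
  have "V - S \<noteq> {}"
    using G.card_outside_clique card_V card_S by (intro notI) simp
  then obtain y where y: "y \<in> V - S" by blast
  obtain q1 q2 where q: "q1 \<in> ?Q y" "q2 \<in> ?Q y" "q1 \<noteq> q2"
    and "card (?B q1 \<inter> ?B y) + card S = 2 * (l + 1)"
    and "card (?B q2 \<inter> ?B y) + card S = 2 * (l + 1)"
    using G.obtain_two_least_meets_in_outer_non_nbhd[OF y] card_Q[OF y] card_S assms by auto
  then have large: "l \<le> card (?B q1 \<inter> ?B q2)"
    using G.card_clique_nbhd_Int_if_least_meets[of q1 q2 y] y card_S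
    by (auto simp: G.outer_non_nbhd_def)
  show False
  proof (cases "E q1 q2")
    case True
    then show False
      using G.card_clique_nbhd_Int_if_adjacent[OF y q(1,2)] large card_V card_S by simp
  next
    case False
    have "q1 \<in> V - S"
      using q(1) by (simp add: G.outer_non_nbhd_def)
    then show False
      using G.card_clique_nbhd_Int_if_non_adjacent[OF y q False] card_Q large card_S assms
      by simp
  qed
qed

end
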